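(* Let $\mathfrak N_0=(C_0,A_\zeta,\mathbb X_0,A,B_0;\sigma_1)$ be an invertible node in which $A$ and $A_\zeta$ generate analytic semigroups, let $\sigma_2=\sigma_2^*$ and $\gamma=-\gamma^*$ be $2\times2$ matrices, and let $x_0\in\mathbb R$. Then there exist an interval $\mathrm I$ containing $x_0$ and a vessel $\mathfrak V$ on $\mathrm I$ (with parameters $\sigma_1,\sigma_2,\gamma$ and the same $A,A_\zeta$) which coincides with $\mathfrak N_0$ at $x=x_0$, i.e. $C(x_0)=C_0$, $\mathbb X(x_0)=\mathbb X_0$, $B(x_0)=B_0$.
   Context: A Krein space $\mathcal K$ is a Hilbert space with an extra continuous Hermitian (possibly indefinite) sesquilinear form; adjoints are with respect to it. $\sigma_1$ is an invertible self-adjoint $2\times2$ matrix. A node $(C,A_\zeta,\mathbb X,A,B;\sigma_1)$: bounded $C:\mathcal K\to\mathbb C^2$, $\mathbb X:\mathcal K\to\mathcal K$, $B:\mathbb C^2\to\mathcal K$, and generators $A,A_\zeta$ of strongly continuous groups with common dense domain $D(A)=D(A_\zeta)$, with $\mathbb X(D(A))\subseteq D(A)$ and $A\mathbb Xu+\mathbb XA_\zeta u+B\sigma_1Cu=0$ for $u\in D(A)$; invertible if $\mathbb X$ is boundedly invertible and $\mathbb X^{-1}(D(A))\subseteq D(A)$. A prevessel: fixed $A,A_\zeta$ and bounded operators $C(x),\mathbb X(x),B(x)$, differentiable in $x\in\mathbb R$, each tuple a node, $B(x)\sigma_2e\in D(A)$ for $e\in\mathbb C^2$, and $\partial_xB=-(AB\sigma_2+B\gamma)\sigma_1^{-1}$,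 $\partial_xCu=\sigma_1^{-1}(-\sigma_2CA_\zeta u+\gamma Cu)$ ($u\in D(A)$), $\partial_x\mathbb X=B\sigma_2C$. A vessel on $\Omega\subseteq\mathbb R$: a prevessel with $\mathbb X(x)$ invertible and the node invertible for every $x\in\Omega$, together with $\gamma_*(x)=\gamma+\sigma_2C\mathbb X^{-1}B\sigma_1-\sigma_1C\mathbb X^{-1}B\sigma_2$ on $\Omega$. *)

theory Defs
  imports "HOL-Analysis.Analysis"
begin

text \<open>The complex Hilbert space K is modelled as a real Banach type 'k together with an
explicit complex scalar multiplication sc and an inner product ip (linear in the first
argument) that induces the norm of 'k.\<close>

definition complex_hilbert :: "(complex \<Rightarrow> 'k::banach \<Rightarrow> 'k) \<Rightarrow> ('k \<Rightarrow> 'k \<Rightarrow> complex) \<Rightarrow> bool" where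
  "complex_hilbert sc ip \<longleftrightarrow>
     (\<forall>x. sc 1 x = x) \<and> (\<forall>a b x. sc a (sc b x) = sc (a * b) x) \<and>
     (\<forall>a x y. sc a (x + y) = sc a x + sc a y) \<and> (\<forall>a b x. sc (a + b) x = sc a x + sc b x) \<and>
     (\<forall>r x. sc (complex_of_real r) x = r *\<^sub>R x) \<and>
     (\<forall>x y z. ip (x + y) z = ip x z + ip y z) \<and> (\<forall>a x y. ip (sc a x) y = a * ip x y) \<and>
     (\<forall>x y. ip y x = cnj (ip x y)) \<and> (\<forall>x. ip x x = complex_of_real ((norm x)\<^sup>2))"

definition krein_space :: "(complex \<Rightarrow> 'k::banach \<Rightarrow> 'k) \<Rightarrow> ('k \<Rightarrow> 'k \<Rightarrow> complex) \<Rightarrow> ('k \<Rightarrow> 'k \<Rightarrow> complex) \<Rightarrow> bool" where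
  "krein_space sc ip kf \<longleftrightarrow> complex_hilbert sc ip \<and>
     (\<forall>x y z. kf (x + y) z = kf x z + kf y z) \<and> (\<forall>a x y. kf (sc a x) y = a * kf x y) \<and>
     (\<forall>x y. kf y x = cnj (kf x y)) \<and> (\<exists>M. \<forall>x y. cmod (kf x y) \<le> M * norm x * norm y)"

definition cblin :: "(complex \<Rightarrow> 'a::real_normed_vector \<Rightarrow> 'a) \<Rightarrow> (complex \<Rightarrow> 'b::real_normed_vector \<Rightarrow> 'b) \<Rightarrow> ('a \<Rightarrow> 'b) \<Rightarrow> bool" where
  "cblin sa sb f \<longleftrightarrow> bounded_linear f \<and> (\<forall>a x. f (sa a x) = sb a (f x))"

abbreviation cv :: "complex \<Rightarrow> complex^2 \<Rightarrow> complex^2" where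
  "cv \<equiv> (\<lambda>a v. a *s v)"

definition madj :: "complex^2^2 \<Rightarrow> complex^2^2" where
  "madj M = (\<chi> i j. cnj (M $ j $ i))"

definition group_generator :: "(complex \<Rightarrow> 'k::banach \<Rightarrow> 'k) \<Rightarrow> 'k set \<Rightarrow> ('k \<Rightarrow> 'k) \<Rightarrow> (real \<Rightarrow> 'k \<Rightarrow> 'k) \<Rightarrow> bool" where
  "group_generator sc D A T \<longleftrightarrow>
     (\<forall>t. cblin sc sc (T t)) \<and> T 0 = id \<and> (\<forall>s t. T (s + t) = T s \<circ> T t) \<and>
     (\<forall>x. continuous_on UNIV (\<lambda>t. T t x)) \<and>
     D = {x. \<exists>y. ((\<lambda>t. T t x) has_vector_derivative y) (at 0)} \<and>
     (\<forall>x\<in>D. ((\<lambda>t. T t x) has_vector_derivative A x) (at 0))"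

definition sector :: "real \<Rightarrow> complex set" where
  "sector \<delta> = {z. z = 0 \<or> \<bar>Arg z\<bar> < \<delta>}"

text \<open>The semigroup (T t), t \<ge> 0, is analytic: it extends to an analytic semigroup on a sector
(Pazy, Def. 2.5.1); analyticity is expressed strongly (equivalent to uniform analyticity
for bounded operators).\<close>
definition analytic_semigroup :: "(complex \<Rightarrow> 'k::banach \<Rightarrow> 'k) \<Rightarrow> (real \<Rightarrow> 'k \<Rightarrow> 'k) \<Rightarrow> bool" where
  "analytic_semigroup sc T \<longleftrightarrow> (\<exists>\<delta>>0. \<exists>S.
     (\<forall>t\<ge>0. S (complex_of_real t) = T t) \<and>
     (\<forall>z\<in>sector \<delta>. cblin sc sc (S z)) \<and>
     (\<forall>z1\<in>sector \<delta>. \<forall>z2\<in>sector \<delta>. S (z1 + z2) = S z1 \<circ> S z2) \<and>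
     (\<forall>x. \<forall>z\<in>sector \<delta> - {0}. \<exists>y. ((\<lambda>h. sc (inverse h) (S (z + h) x - S z x)) \<longlongrightarrow> y) (at 0)) \<and>
     (\<forall>x. ((\<lambda>z. S z x) \<longlongrightarrow> x) (at 0 within sector \<delta>)))"

definition node :: "(complex \<Rightarrow> 'k::banach \<Rightarrow> 'k) \<Rightarrow> 'k set \<Rightarrow> ('k \<Rightarrow> 'k) \<Rightarrow> ('k \<Rightarrow> 'k) \<Rightarrow> complex^2^2
     \<Rightarrow> ('k \<Rightarrow> complex^2) \<Rightarrow> ('k \<Rightarrow> 'k) \<Rightarrow> (complex^2 \<Rightarrow> 'k) \<Rightarrow> bool" where
  "node sc D A A\<zeta> \<sigma>1 C X B \<longleftrightarrow>
     cblin sc cv C \<and> cblin sc sc X \<and> cblin cv sc B \<and>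
     (\<exists>T. group_generator sc D A T) \<and> (\<exists>T. group_generator sc D A\<zeta> T) \<and>
     closure D = UNIV \<and> X ` D \<subseteq> D \<and>
     (\<forall>u\<in>D. A (X u) + X (A\<zeta> u) + B (\<sigma>1 *v C u) = 0)"

definition invertible_node :: "(complex \<Rightarrow> 'k::banach \<Rightarrow> 'k) \<Rightarrow> 'k set \<Rightarrow> ('k \<Rightarrow> 'k) \<Rightarrow> ('k \<Rightarrow> 'k) \<Rightarrow> complex^2^2
     \<Rightarrow> ('k \<Rightarrow> complex^2) \<Rightarrow> ('k \<Rightarrow> 'k) \<Rightarrow> (complex^2 \<Rightarrow> 'k) \<Rightarrow> bool" where
  "invertible_node sc D A A\<zeta> \<sigma>1 C X B \<longleftrightarrow> node sc D A A\<zeta> \<sigma>1 C X B \<and>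
     (\<exists>Xi. cblin sc sc Xi \<and> (\<forall>u. Xi (X u) = u) \<and> (\<forall>u. X (Xi u) = u) \<and> Xi ` D \<subseteq> D)"

definition op_has_deriv :: "(real \<Rightarrow> 'a::real_normed_vector \<Rightarrow> 'b::real_normed_vector) \<Rightarrow> ('a \<Rightarrow> 'b) \<Rightarrow> real \<Rightarrow> bool" where
  "op_has_deriv F F' x \<longleftrightarrow> bounded_linear F' \<and>
     ((\<lambda>h. onorm (\<lambda>u. inverse h *\<^sub>R (F (x + h) u - F x u) - F' u)) \<longlongrightarrow> 0) (at 0)"

definition prevessel :: "(complex \<Rightarrow> 'k::banach \<Rightarrow> 'k) \<Rightarrow> 'k set \<Rightarrow> ('k \<Rightarrow> 'k) \<Rightarrow> ('k \<Rightarrow> 'k)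
     \<Rightarrow> complex^2^2 \<Rightarrow> complex^2^2 \<Rightarrow> complex^2^2
     \<Rightarrow> (real \<Rightarrow> 'k \<Rightarrow> complex^2) \<Rightarrow> (real \<Rightarrow> 'k \<Rightarrow> 'k) \<Rightarrow> (real \<Rightarrow> complex^2 \<Rightarrow> 'k) \<Rightarrow> bool" where
  "prevessel sc D A A\<zeta> \<sigma>1 \<sigma>2 \<gamma> C X B \<longleftrightarrow>
     (\<forall>x. node sc D A A\<zeta> \<sigma>1 (C x) (X x) (B x)) \<and>
     (\<forall>x e. B x (\<sigma>2 *v e) \<in> D) \<and>
     (\<forall>x. \<exists>B'. op_has_deriv B B' x \<and>
        (\<forall>e. B' e = - (A (B x (\<sigma>2 *v (matrix_inv \<sigma>1 *v e))) + B x (\<gamma> *v (matrix_inv \<sigma>1 *v e))))) \<and>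
     (\<forall>x. \<exists>C'. op_has_deriv C C' x \<and>
        (\<forall>u\<in>D. C' u = matrix_inv \<sigma>1 *v (- (\<sigma>2 *v C x (A\<zeta> u)) + \<gamma> *v C x u))) \<and>
     (\<forall>x. op_has_deriv X (\<lambda>u. B x (\<sigma>2 *v C x u)) x)"

definition vessel :: "(complex \<Rightarrow> 'k::banach \<Rightarrow> 'k) \<Rightarrow> 'k set \<Rightarrow> ('k \<Rightarrow> 'k) \<Rightarrow> ('k \<Rightarrow> 'k)
     \<Rightarrow> complex^2^2 \<Rightarrow> complex^2^2 \<Rightarrow> complex^2^2 \<Rightarrow> real set
     \<Rightarrow> (real \<Rightarrow> 'k \<Rightarrow> complex^2) \<Rightarrow> (real \<Rightarrow> 'k \<Rightarrow> 'k) \<Rightarrow> (real \<Rightarrow> complex^2 \<Rightarrow> 'k) \<Rightarrow> bool" where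
  "vessel sc D A A\<zeta> \<sigma>1 \<sigma>2 \<gamma> \<Omega> C X B \<longleftrightarrow>
     prevessel sc D A A\<zeta> \<sigma>1 \<sigma>2 \<gamma> C X B \<and>
     (\<forall>x\<in>\<Omega>. invertible_node sc D A A\<zeta> \<sigma>1 (C x) (X x) (B x))"

end

theory Submission
  imports Defs
begin

text \<open>A strongly continuous group whose generator also generates an analytic semigroup has a bounded
generator: analyticity makes \<open>t \<mapsto> T t x\<close> differentiable at \<open>t = 1\<close>, so \<open>T 1\<close> maps into the
domain, and \<open>T 1\<close> is onto; the generator is then a pointwise limit of bounded difference
quotients, hence bounded by uniform boundedness. With \<open>A\<close> and \<open>A\<zeta>\<close> bounded, the equations for
\<open>B\<close> and \<open>C\<close> are linear and are solved by operator exponentials (which keep them complex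
linear), and \<open>X\<close> is obtained by integrating \<open>B \<sigma>\<^sub>2 C\<close>. The node identity
\<open>A X + X A\<zeta> + B \<sigma>\<^sub>1 C = 0\<close> then has zero derivative, so it persists from \<open>x\<^sub>0\<close>, and \<open>X\<close>
stays invertible near \<open>x\<^sub>0\<close> because invertibility is stable under small perturbations.\<close>

section \<open>Operator exponentials and linear differential equations\<close>

text \<open>Bounded operators on \<open>'a \<times> real\<close> form a Banach algebra, so \<open>exp\<close> is available; the extra real
coordinate keeps the algebra nontrivial (\<open>1 \<noteq> 0\<close>) even when \<open>'a\<close> is the zero space.\<close>

typedef (overloaded) 'a endo = "UNIV :: (('a::real_normed_vector \<times> real) \<Rightarrow>\<^sub>L ('a \<times> real)) set"
  morphisms Rep_endo Abs_endo by auto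

setup_lifting type_definition_endo

instantiation endo :: (real_normed_vector) real_normed_algebra_1
begin
lift_definition zero_endo :: "'a endo" is 0 .
lift_definition one_endo :: "'a endo" is id_blinfun .
lift_definition plus_endo :: "'a endo \<Rightarrow> 'a endo \<Rightarrow> 'a endo" is "(+)" .
lift_definition minus_endo :: "'a endo \<Rightarrow> 'a endo \<Rightarrow> 'a endo" is "(-)" .
lift_definition uminus_endo :: "'a endo \<Rightarrow> 'a endo" is "uminus" .
lift_definition times_endo :: "'a endo \<Rightarrow> 'a endo \<Rightarrow> 'a endo" is "(o\<^sub>L)" .
lift_definition scaleR_endo :: "real \<Rightarrow> 'a endo \<Rightarrow> 'a endo" is "(*\<^sub>R)" .
lift_definition norm_endo :: "'a endo \<Rightarrow> real" is norm .
definition dist_endo :: "'a endo \<Rightarrow> 'a endo \<Rightarrow> real" where "dist_endo a b = norm (a - b)"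
definition sgn_endo :: "'a endo \<Rightarrow> 'a endo" where "sgn_endo x = scaleR (inverse (norm x)) x"
definition uniformity_endo :: "('a endo \<times> 'a endo) filter" where
  "uniformity_endo = (INF e\<in>{0 <..}. principal {(x, y). dist x y < e})"
definition open_endo :: "'a endo set \<Rightarrow> bool" where
  "open_endo S = (\<forall>x\<in>S. \<forall>\<^sub>F (x', y) in uniformity. x' = x \<longrightarrow> y \<in> S)"

lemma norm_id_blinfun_prod_real: "norm (id_blinfun :: ('a \<times> real) \<Rightarrow>\<^sub>L ('a \<times> real)) = 1"
proof (rule antisym)
  show "norm (id_blinfun :: ('a \<times> real) \<Rightarrow>\<^sub>L ('a \<times> real)) \<le> 1"
    by (rule norm_blinfun_id_le)
  have "norm (blinfun_apply (id_blinfun :: ('a \<times> real) \<Rightarrow>\<^sub>L ('a \<times> real)) (0, 1))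
      \<le> norm (id_blinfun :: ('a \<times> real) \<Rightarrow>\<^sub>L ('a \<times> real)) * norm ((0::'a), (1::real))"
    by (rule norm_blinfun)
  then show "1 \<le> norm (id_blinfun :: ('a \<times> real) \<Rightarrow>\<^sub>L ('a \<times> real))"
    by (simp add: norm_Pair)
qed

instance
proof
  fix a b c :: "'a endo" and r s :: real
  show "a * b * c = a * (b * c)" by transfer (auto intro!: blinfun_eqI)
  show "1 * a = a" by transfer (auto intro!: blinfun_eqI)
  show "a * 1 = a" by transfer (auto intro!: blinfun_eqI)
  show "(a + b) * c = a * c + b * c" by transfer (auto intro!: blinfun_eqI simp: blinfun.bilinear_simps)
  show "a * (b + c) = a * b + a * c" by transfer (auto intro!: blinfun_eqI simp: blinfun.bilinear_simps)
  show "(0::'a endo) \<noteq> 1" by transfer (metis norm_id_blinfun_prod_real norm_zero zero_neq_one)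
  show "a + b + c = a + (b + c)" by transfer simp
  show "a + b = b + a" by transfer simp
  show "0 + a = a" by transfer simp
  show "- a + a = 0" by transfer simp
  show "a - b = a + - b" by transfer simp
  show "r *\<^sub>R (a + b) = r *\<^sub>R a + r *\<^sub>R b" by transfer (simp add: scaleR_add_right)
  show "(r + s) *\<^sub>R a = r *\<^sub>R a + s *\<^sub>R a" by transfer (simp add: scaleR_add_left)
  show "r *\<^sub>R s *\<^sub>R a = (r * s) *\<^sub>R a" by transfer simp
  show "1 *\<^sub>R a = a" by transfer simp
  show "r *\<^sub>R a * b = r *\<^sub>R (a * b)" by transfer (auto intro!: blinfun_eqI simp: blinfun.bilinear_simps)
  show "a * r *\<^sub>R b = r *\<^sub>R (a * b)" by transfer (auto intro!: blinfun_eqI simp: blinfun.bilinear_simps)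
  show "norm (a * b) \<le> norm a * norm b" by transfer (rule norm_blinfun_compose)
  show "norm (1::'a endo) = 1" by transfer (rule norm_id_blinfun_prod_real)
  show "dist a b = norm (a - b)" by (simp add: dist_endo_def)
  show "sgn a = inverse (norm a) *\<^sub>R a" by (simp add: sgn_endo_def)
  show "(norm a = 0) = (a = 0)" by transfer simp
  show "norm (a + b) \<le> norm a + norm b" by transfer (rule norm_triangle_ineq)
  show "norm (r *\<^sub>R a) = \<bar>r\<bar> * norm a" by transfer simp
  show "(uniformity :: ('a endo \<times> 'a endo) filter) = (INF e\<in>{0 <..}. principal {(x, y). dist x y < e})"
    by (simp add: uniformity_endo_def)
  fix U :: "'a endo set"
  show "open U = (\<forall>x\<in>U. \<forall>\<^sub>F (x', y) in uniformity. x' = x \<longrightarrow> y \<in> U)"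
    by (simp add: open_endo_def)
qed
end

lemma norm_Rep_endo: "norm (Rep_endo a) = norm a"
  by transfer simp

lemma Rep_endo_diff: "Rep_endo (a - b) = Rep_endo a - Rep_endo b"
  by transfer simp

lemma bounded_linear_Rep_endo: "bounded_linear Rep_endo"
  by (rule bounded_linear_intro[where K=1]; transfer; simp)

instance endo :: (banach) banach
proof
  fix X :: "nat \<Rightarrow> 'a endo"
  assume "Cauchy X"
  then have "Cauchy (\<lambda>n. Rep_endo (X n))"
    by (simp add: Cauchy_def dist_norm norm_Rep_endo flip: Rep_endo_diff)
  then obtain L where "(\<lambda>n. Rep_endo (X n)) \<longlonglongrightarrow> L"
    using Cauchy_convergent_iff convergent_def by blast
  then have "X \<longlonglongrightarrow> Abs_endo L"
    unfolding LIMSEQ_iff by (metis Abs_endo_inverse Rep_endo_diff UNIV_I norm_Rep_endo)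
  then show "convergent X"
    by (auto simp: convergent_def)
qed

definition lift_endo :: "('v::real_normed_vector \<Rightarrow> 'v) \<Rightarrow> 'v endo" where
  "lift_endo L = Abs_endo (Blinfun (\<lambda>p. (L (fst p), 0)))"

lemma lift_endo_apply:
  fixes L :: "'v::real_normed_vector \<Rightarrow> 'v"
  assumes "bounded_linear L"
  shows "blinfun_apply (Rep_endo (lift_endo L)) p = (L (fst p), 0)"
proof -
  have "bounded_linear (\<lambda>p::'v \<times> real. (L (fst p), 0::real))"
    by (intro bounded_linear_Pair bounded_linear_compose[OF assms] bounded_linear_fst bounded_linear_zero)
  then show ?thesis
    by (simp add: lift_endo_def Abs_endo_inverse bounded_linear_Blinfun_apply)
qed

lemma lift_endo_power_apply:
  fixes L :: "'v::real_normed_vector \<Rightarrow> 'v"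
  assumes "bounded_linear L"
  shows "blinfun_apply (Rep_endo (lift_endo L ^ n)) (u, 0) = ((L ^^ n) u, 0)"
  by (induction n) (simp_all add: one_endo.rep_eq times_endo.rep_eq lift_endo_apply[OF assms])

lemma linear_ode_solution_in_closed_subspace:
  fixes L :: "'v::banach \<Rightarrow> 'v" and P :: "'v set"
  assumes L: "bounded_linear L" and P: "closed P" "subspace P" "L ` P \<subseteq> P" and "v \<in> P"
  shows "\<exists>y. y s = v \<and> (\<forall>t. (y has_vector_derivative L (y t)) (at t)) \<and> (\<forall>t. y t \<in> P)"
proof -
  define M where "M = lift_endo L"
  define Phi :: "'v endo \<Rightarrow> 'v" where "Phi e = fst (blinfun_apply (Rep_endo e) (v, 0))" for e
  interpret Phi: bounded_linear Phi
    unfolding Phi_def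
    by (intro bounded_linear_compose[OF bounded_linear_fst]
        bounded_linear_compose[OF blinfun.bounded_linear_left bounded_linear_Rep_endo])
  define y where "y t = Phi (exp ((t - s) *\<^sub>R M))" for t
  have "y s = v"
    unfolding y_def Phi_def by (simp add: one_endo.rep_eq)
  moreover have "(y has_vector_derivative L (y t)) (at t)" for t
  proof -
    have "((\<lambda>t. t - s) has_vector_derivative 1) (at t)"
      by (auto intro!: derivative_eq_intros)
    from vector_diff_chain_at[OF this exp_scaleR_has_vector_derivative_left, of M]
    have "((\<lambda>t. exp ((t - s) *\<^sub>R M)) has_vector_derivative M * exp ((t - s) *\<^sub>R M)) (at t)"
      by (simp add: o_def)
    then have "(y has_vector_derivative Phi (M * exp ((t - s) *\<^sub>R M))) (at t)"
      unfolding y_def by (rule Phi.has_vector_derivative)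
    moreover have "Phi (M * exp ((t - s) *\<^sub>R M)) = L (y t)"
      unfolding y_def Phi_def by (simp add: times_endo.rep_eq M_def lift_endo_apply[OF L])
    ultimately show ?thesis by simp
  qed
  moreover have "y t \<in> P" for t
  proof -
    let ?x = "(t - s) *\<^sub>R M"
    have "(\<lambda>n. ?x ^ n /\<^sub>R fact n) sums exp ?x"
      unfolding exp_def by (rule summable_sums[OF summable_exp_generic])
    then have "(\<lambda>n. Phi (?x ^ n /\<^sub>R fact n)) sums y t"
      unfolding y_def by (rule Phi.sums)
    then have lim: "(\<lambda>n. \<Sum>i<n. Phi (?x ^ i /\<^sub>R fact i)) \<longlonglongrightarrow> y t"
      by (simp add: sums_def)
    have "(L ^^ n) v \<in> P" for n
      by (induction n) (use P(3) \<open>v \<in> P\<close> in auto)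
    then have "Phi (?x ^ i /\<^sub>R fact i) \<in> P" for i
      using P(2) unfolding Phi_def
      by (simp add: scaleR_endo.rep_eq M_def lift_endo_power_apply[OF L] blinfun.scaleR_left subspace_scale)
    then have "(\<Sum>i<n. Phi (?x ^ i /\<^sub>R fact i)) \<in> P" for n
      using P(2) by (simp add: subspace_sum)
    then show ?thesis
      using closed_sequentially[OF P(1) _ lim] by blast
  qed
  ultimately show ?thesis by blast
qed

lemma has_vector_derivative_at_iff_difference_quotient:
  fixes f :: "real \<Rightarrow> 'b::real_normed_vector"
  shows "(f has_vector_derivative y) (at x) \<longleftrightarrow>
    ((\<lambda>h. inverse h *\<^sub>R (f (x + h) - f x)) \<longlongrightarrow> y) (at 0)"
proof -
  have quotient: "norm (f (x + h) - f x - h *\<^sub>R y) / \<bar>h\<bar> = norm (inverse h *\<^sub>R (f (x + h) - f x) - y)"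
    if "h \<noteq> 0" for h
  proof -
    have "inverse h *\<^sub>R (f (x + h) - f x) - y = inverse h *\<^sub>R (f (x + h) - f x - h *\<^sub>R y)"
      using that by (simp add: algebra_simps)
    then show ?thesis
      by (simp add: divide_inverse_commute)
  qed
  have "(f has_vector_derivative y) (at x) \<longleftrightarrow>
      ((\<lambda>h. norm (f (x + h) - f x - h *\<^sub>R y) / norm h) \<longlongrightarrow> 0) (at 0)"
    by (simp add: has_vector_derivative_def has_derivative_at bounded_linear_scaleR_left)
  also have "\<dots> \<longleftrightarrow> ((\<lambda>h. norm (inverse h *\<^sub>R (f (x + h) - f x) - y)) \<longlongrightarrow> 0) (at 0)"
    by (intro tendsto_cong) (auto simp: eventually_at_filter quotient intro!: always_eventually)
  also have "\<dots> \<longleftrightarrow> ((\<lambda>h. inverse h *\<^sub>R (f (x + h) - f x)) \<longlongrightarrow> y) (at 0)"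
    by (simp add: tendsto_norm_zero_iff LIM_zero_iff)
  finally show ?thesis .
qed

lemma op_has_deriv_blinfun_apply:
  fixes F :: "real \<Rightarrow> 'a::real_normed_vector \<Rightarrow>\<^sub>L 'b::real_normed_vector"
  assumes "(F has_vector_derivative F') (at x)"
  shows "op_has_deriv (\<lambda>t. blinfun_apply (F t)) (blinfun_apply F') x"
proof -
  have "((\<lambda>h. norm (inverse h *\<^sub>R (F (x + h) - F x) - F')) \<longlongrightarrow> 0) (at 0)"
    using assms by (simp add: has_vector_derivative_at_iff_difference_quotient tendsto_norm_zero_iff LIM_zero_iff)
  moreover have "norm (inverse h *\<^sub>R (F (x + h) - F x) - F') =
      onorm (\<lambda>u. inverse h *\<^sub>R (F (x + h) u - F x u) - F' u)" for h
    unfolding norm_blinfun.rep_eq by (rule arg_cong[where f=onorm]) (auto simp: blinfun.bilinear_simps)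
  ultimately show ?thesis
    unfolding op_has_deriv_def by (simp add: blinfun.bounded_linear_right)
qed

lemmas has_vector_derivative_blinfun_compose_const =
  bounded_linear.has_vector_derivative[OF bounded_bilinear.bounded_linear_left[OF bounded_bilinear_blinfun_compose]]

lemmas has_vector_derivative_const_blinfun_compose =
  bounded_linear.has_vector_derivative[OF bounded_bilinear.bounded_linear_right[OF bounded_bilinear_blinfun_compose]]

lemmas bounded_linear_blinfun_compose_const =
  bounded_linear_compose[OF bounded_bilinear.bounded_linear_left[OF bounded_bilinear_blinfun_compose]]

lemmas bounded_linear_const_blinfun_compose =
  bounded_linear_compose[OF bounded_bilinear.bounded_linear_right[OF bounded_bilinear_blinfun_compose]]

lemma continuous_has_antiderivative:
  fixes g :: "real \<Rightarrow> 'v::banach"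
  assumes "continuous_on UNIV g"
  shows "\<exists>F. F s = v \<and> (\<forall>t. (F has_vector_derivative g t) (at t))"
proof -
  define F where "F t = v + integral {s..t} g - integral {t..s} g" for t
  have "(F has_vector_derivative g t) (at t)" for t
  proof -
    define a where "a = min t s - 1"
    define b where "b = max t s + 1"
    have integrable: "g integrable_on {c..d}" for c d
      by (rule integrable_continuous_real) (rule continuous_on_subset[OF assms], simp)
    have F_eq: "F r = v + integral {a..r} g - integral {a..s} g" if "r \<in> {a<..<b}" for r
    proof (cases "s \<le> r")
      case True
      then have "integral {a..s} g + integral {s..r} g = integral {a..r} g"
        using Henstock_Kurzweil_Integration.integral_combine[where a=a and c=s and b=r and f=g]
          that integrable by (auto simp: a_def)
      then show ?thesis
        using True by (cases "r = s") (auto simp: F_def algebra_simps)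
    next
      case False
      then have "integral {a..r} g + integral {r..s} g = integral {a..s} g"
        using Henstock_Kurzweil_Integration.integral_combine[where a=a and c=r and b=s and f=g]
          that integrable by (auto simp: a_def)
      then show ?thesis
        using False by (auto simp: F_def algebra_simps)
    qed
    have "((\<lambda>u. integral {a..u} g) has_vector_derivative g t) (at t within {a..b})"
      by (rule integral_has_vector_derivative[OF continuous_on_subset[OF assms]]) (auto simp: a_def b_def)
    then have "((\<lambda>u. integral {a..u} g) has_vector_derivative g t) (at t within {a<..<b})"
      by (rule has_vector_derivative_within_subset) auto
    then have "((\<lambda>u. integral {a..u} g) has_vector_derivative g t) (at t)"
      by (subst (asm) has_vector_derivative_within_open) (auto simp: a_def b_def)
    then have "((\<lambda>u. v + integral {a..u} g - integral {a..s} g) has_vector_derivative g t) (at t)"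
      by (auto intro!: derivative_eq_intros)
    then show ?thesis
      by (rule has_vector_derivative_transform_within_open[of _ _ _ "{a<..<b}"])
         (auto simp: a_def b_def F_eq)
  qed
  then show ?thesis
    by (auto simp: F_def intro!: exI[of _ F])
qed

section \<open>Generators of analytic groups are bounded\<close>

lemma closed_cover_has_interior:
  fixes E :: "nat \<Rightarrow> 'a::complete_space set"
  assumes "\<And>n. closed (E n)" and "\<Union>(range E) = UNIV"
  shows "\<exists>n. interior (E n) \<noteq> {}"
  using Baire_category_alt[of euclidean "range E"] assms
  by (auto simp: completely_metrizable_space_euclidean)

lemma uniform_boundedness:
  fixes F :: "'i \<Rightarrow> 'a::banach \<Rightarrow> 'b::real_normed_vector"
  assumes lin: "\<And>i. bounded_linear (F i)" and bdd: "\<And>x. bounded (range (\<lambda>i. F i x))"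
  shows "\<exists>K. \<forall>i x. norm (F i x) \<le> K * norm x"
proof -
  define E where "E n = {x. \<forall>i. norm (F i x) \<le> real n}" for n :: nat
  have "closed (E n)" for n
  proof -
    have "closed {x. norm (F i x) \<le> real n}" for i
      by (intro closed_Collect_le continuous_intros linear_continuous_on[OF lin])
    then show ?thesis
      by (simp add: E_def Collect_all_eq closed_INT)
  qed
  moreover have "\<Union>(range E) = UNIV"
  proof -
    have "\<exists>n. x \<in> E n" for x
    proof -
      obtain M where "\<And>i. norm (F i x) \<le> M"
        using bdd[of x] by (auto simp: bounded_iff)
      moreover obtain n where "M \<le> real n"
        using real_arch_simple by blast
      ultimately show ?thesis
        unfolding E_def by (blast intro: order_trans)
    qed
    then show ?thesis by blast
  qed
  ultimately obtain n where "interior (E n) \<noteq> {}"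
    using closed_cover_has_interior by blast
  then obtain z r where "r > 0" and ball: "ball z r \<subseteq> E n"
    using mem_interior by blast
  have small: "norm (F i y) \<le> 2 * real n" if "norm y < r" for i y
  proof -
    have "z + y \<in> E n" "z \<in> E n"
      using ball that \<open>r > 0\<close> by (auto simp: dist_norm)
    have "F i y = F i (z + y) - F i z"
      using lin[of i] by (simp add: linear_simps)
    then have "norm (F i y) \<le> norm (F i (z + y)) + norm (F i z)"
      by (simp add: norm_triangle_ineq4)
    also have "\<dots> \<le> real n + real n"
      using \<open>z + y \<in> E n\<close> \<open>z \<in> E n\<close> unfolding E_def by (intro add_mono) auto
    finally show ?thesis by simp
  qed
  have "norm (F i x) \<le> 4 * real n / r * norm x" for i x
  proof (cases "x = 0")
    case True
    then show ?thesis using lin[of i] by (simp add: linear_simps)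
  next
    case False
    define c where "c = r / (2 * norm x)"
    have "c > 0" "norm (c *\<^sub>R x) < r"
      using False \<open>r > 0\<close> by (simp_all add: c_def)
    then have "c * norm (F i x) \<le> 2 * real n"
      using small[of "c *\<^sub>R x" i] lin[of i] by (simp add: linear_simps)
    then show ?thesis
      using \<open>c > 0\<close> \<open>r > 0\<close> False by (simp add: c_def field_simps)
  qed
  then show ?thesis by blast
qed

lemma bounded_linear_pointwise_limit:
  fixes F :: "nat \<Rightarrow> 'a::banach \<Rightarrow> 'b::real_normed_vector"
  assumes lin: "\<And>n. bounded_linear (F n)" and lim: "\<And>x. (\<lambda>n. F n x) \<longlonglongrightarrow> G x"
  shows "bounded_linear G"
proof -
  obtain K where K: "\<And>n x. norm (F n x) \<le> K * norm x"
    using uniform_boundedness[of F, OF lin convergent_imp_bounded[OF lim]] by blast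
  show ?thesis
  proof (rule bounded_linear_intro)
    fix x y :: 'a and r :: real
    have "(\<lambda>n. F n x + F n y) \<longlonglongrightarrow> G x + G y" "(\<lambda>n. r *\<^sub>R F n x) \<longlonglongrightarrow> r *\<^sub>R G x"
      by (intro tendsto_intros lim)+
    moreover have "F n (x + y) = F n x + F n y" "F n (r *\<^sub>R x) = r *\<^sub>R F n x" for n
      using lin[of n] by (simp_all add: linear_simps)
    ultimately show "G (x + y) = G x + G y" "G (r *\<^sub>R x) = r *\<^sub>R G x"
      using lim[of "x + y"] lim[of "r *\<^sub>R x"] by (auto dest: LIMSEQ_unique)
    show "norm (G x) \<le> norm x * K"
      using K by (intro tendsto_upperbound[OF tendsto_norm[OF lim]]) (auto simp: mult.commute)
  qed
qed

lemma cblin_pointwise_limit: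
  fixes F :: "nat \<Rightarrow> 'a::banach \<Rightarrow> 'b::real_normed_vector"
  assumes F: "\<And>n. cblin sa sb (F n)" and sb: "\<And>a. bounded_linear (sb a)"
    and lim: "\<And>x. (\<lambda>n. F n x) \<longlonglongrightarrow> G x"
  shows "cblin sa sb G"
proof -
  have "bounded_linear G"
    using F unfolding cblin_def by (intro bounded_linear_pointwise_limit[of F G, OF _ lim]) blast
  moreover have "G (sa a x) = sb a (G x)" for a x
  proof -
    have "(\<lambda>n. sb a (F n x)) \<longlonglongrightarrow> sb a (G x)"
      by (rule bounded_linear.tendsto[OF sb lim])
    moreover have "F n (sa a x) = sb a (F n x)" for n
      using F unfolding cblin_def by blast
    ultimately show ?thesis
      using LIMSEQ_unique[OF lim[of "sa a x"]] by simp
  qed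
  ultimately show ?thesis
    unfolding cblin_def by blast
qed

lemma complex_hilbert_scale_bounded_linear:
  assumes "complex_hilbert sc ip"
  shows "bounded_linear (sc a)"
proof (rule bounded_linear_intro[where K="cmod a"])
  note H = assms[unfolded complex_hilbert_def]
  have add: "\<And>a x y. sc a (x + y) = sc a x + sc a y"
    and mult: "\<And>a b x. sc a (sc b x) = sc (a * b) x"
    and real: "\<And>r x. sc (complex_of_real r) x = r *\<^sub>R x"
    and ip_scale: "\<And>a x y. ip (sc a x) y = a * ip x y"
    and ip_sym: "\<And>x y. ip y x = cnj (ip x y)"
    and ip_norm: "\<And>x. ip x x = complex_of_real ((norm x)\<^sup>2)"
    using H by blast+
  fix x y and r :: real
  show "sc a (x + y) = sc a x + sc a y"
    by (rule add)
  show "sc a (r *\<^sub>R x) = r *\<^sub>R sc a x"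
    by (metis mult real mult.commute)
  have "complex_of_real ((norm (sc a x))\<^sup>2) = a * cnj (a * ip x x)"
    by (metis ip_norm ip_scale ip_sym)
  also have "\<dots> = complex_of_real ((cmod a * norm x)\<^sup>2)"
    by (simp add: ip_norm mult.assoc mult.left_commute power_mult_distrib flip: complex_norm_square)
  finally have "(norm (sc a x))\<^sup>2 = (cmod a * norm x)\<^sup>2"
    using of_real_eq_iff by blast
  then have "norm (sc a x) = cmod a * norm x"
    by (simp add: power2_eq_iff_nonneg)
  then show "norm (sc a x) \<le> norm x * cmod a"
    by (simp add: mult.commute)
qed

text \<open>Analyticity gives the derivative of \<open>t \<mapsto> T t x\<close> at \<open>t = 1\<close>, i.e.\ \<open>T 1 x \<in> D\<close>; as \<open>T 1\<close> is
onto, \<open>D\<close> is everything.\<close>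

lemma analytic_group_generator_domain_UNIV:
  assumes H: "complex_hilbert sc ip" and G: "group_generator sc D A T" and "analytic_semigroup sc T"
  shows "D = UNIV"
proof -
  have T0: "T 0 = id" and T_add: "\<And>s t. T (s + t) = T s \<circ> T t"
    and D_def: "D = {x. \<exists>y. ((\<lambda>t. T t x) has_vector_derivative y) (at 0)}"
    using G unfolding group_generator_def by blast+
  obtain \<delta> S where "\<delta> > 0" and S_T: "\<And>t. t \<ge> 0 \<Longrightarrow> S (complex_of_real t) = T t"
    and S_diff: "\<And>x z. z \<in> sector \<delta> - {0} \<Longrightarrow>
      \<exists>y. ((\<lambda>h. sc (inverse h) (S (z + h) x - S z x)) \<longlongrightarrow> y) (at 0)"
    using assms(3) unfolding analytic_semigroup_def by blast
  have real_scale: "sc (complex_of_real r) v = r *\<^sub>R v" for r v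
    using H unfolding complex_hilbert_def by blast
  have "T 1 x \<in> D" for x
  proof -
    have "1 \<in> sector \<delta> - {0}"
      using \<open>\<delta> > 0\<close> by (simp add: sector_def)
    then obtain y where y: "((\<lambda>h. sc (inverse h) (S (1 + h) x - S 1 x)) \<longlongrightarrow> y) (at 0)"
      using S_diff by blast
    have "filterlim complex_of_real (at 0) (at (0::real))"
      by (rule filterlim_atI) (auto intro!: tendsto_eq_intros simp: eventually_at_filter)
    from filterlim_compose[OF y this]
    have "((\<lambda>h. inverse h *\<^sub>R (S (1 + complex_of_real h) x - S 1 x)) \<longlongrightarrow> y) (at 0)"
      by (simp add: real_scale flip: of_real_inverse)
    moreover have "\<forall>\<^sub>F h in at (0::real).
        inverse h *\<^sub>R (S (1 + complex_of_real h) x - S 1 x) = inverse h *\<^sub>R (T (0 + h) (T 1 x) - T 0 (T 1 x))"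
    proof -
      have "\<forall>\<^sub>F h in at (0::real). \<bar>h\<bar> < 1"
        by (rule eventually_at_ball'[of 1 0 UNIV, THEN eventually_mono]) (auto simp: dist_real_def)
      then show ?thesis
        by (rule eventually_mono) (use S_T[of "1 + _"] S_T[of 1] T_add T0 in \<open>auto simp: add.commute\<close>)
    qed
    ultimately have "((\<lambda>h. inverse h *\<^sub>R (T (0 + h) (T 1 x) - T 0 (T 1 x))) \<longlongrightarrow> y) (at 0)"
      by (rule Lim_transform_eventually)
    then show ?thesis
      unfolding D_def by (auto simp: has_vector_derivative_at_iff_difference_quotient)
  qed
  moreover have "T 1 (T (-1) x) = x" for x
    using T_add[of 1 "-1"] T0 by (metis comp_apply add.right_inverse id_apply)
  ultimately show ?thesis
    by (metis UNIV_eq_I)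
qed

lemma group_generator_UNIV_cblin:
  assumes H: "complex_hilbert sc ip" and G: "group_generator sc UNIV A T"
  shows "cblin sc sc A"
proof -
  have T_cblin: "\<And>t. cblin sc sc (T t)" and T0: "T 0 = id"
    and der: "\<And>x. ((\<lambda>t. T t x) has_vector_derivative A x) (at 0)"
    using G unfolding group_generator_def by blast+
  define h where "h n = inverse (real (Suc n))" for n
  define F where "F n x = inverse (h n) *\<^sub>R (T (h n) x - x)" for n x
  have h_lim: "filterlim h (at 0) sequentially"
    unfolding h_def by (rule filterlim_atI[OF LIMSEQ_inverse_real_of_nat]) simp
  have F_lim: "(\<lambda>n. F n x) \<longlonglongrightarrow> A x" for x
  proof -
    have "((\<lambda>s. inverse s *\<^sub>R (T s x - x)) \<longlongrightarrow> A x) (at 0)"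
      using der[of x] T0 by (simp add: has_vector_derivative_at_iff_difference_quotient)
    from filterlim_compose[OF this h_lim] show ?thesis
      by (simp add: F_def)
  qed
  have F_cblin: "cblin sc sc (F n)" for n
  proof -
    have T_bl: "bounded_linear (T (h n))" and T_sc: "\<And>a x. T (h n) (sc a x) = sc a (T (h n) x)"
      using T_cblin[of "h n"] unfolding cblin_def by blast+
    have "bounded_linear (F n)"
      unfolding F_def
      by (intro bounded_linear_compose[OF bounded_linear_scaleR_right]
          bounded_linear_sub T_bl bounded_linear_ident)
    moreover have "F n (sc a x) = sc a (F n x)" for a x
    proof -
      interpret sc: bounded_linear "sc a"
        by (rule complex_hilbert_scale_bounded_linear[OF H])
      show ?thesis
        by (simp add: F_def T_sc sc.diff sc.scaleR)
    qed
    ultimately show ?thesis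
      unfolding cblin_def by blast
  qed
  show ?thesis
    by (rule cblin_pointwise_limit[OF F_cblin complex_hilbert_scale_bounded_linear[OF H] F_lim])
qed

section \<open>Perturbation of inverses\<close>

lemma bounded_linear_inverse_perturbation:
  fixes X0 X :: "'a::banach \<Rightarrow> 'b::real_normed_vector" and Xi :: "'b \<Rightarrow> 'a"
  assumes X0: "bounded_linear X0" and Xi: "bounded_linear Xi" and X: "bounded_linear X"
    and left: "\<And>u. Xi (X0 u) = u" and right: "\<And>v. X0 (Xi v) = v"
    and small: "onorm Xi * onorm (\<lambda>u. X u - X0 u) < 1"
  shows "\<exists>Y. bounded_linear Y \<and> (\<forall>u. Y (X u) = u) \<and> (\<forall>v. X (Y v) = v)"
proof -
  interpret X0: bounded_linear X0 by (rule X0)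
  interpret Xi: bounded_linear Xi by (rule Xi)
  interpret X: bounded_linear X by (rule X)
  define De where "De = (\<lambda>u. X u - X0 u)"
  interpret De: bounded_linear De
    unfolding De_def by (intro bounded_linear_sub X X0)
  define c where "c = onorm Xi * onorm De"
  have "0 \<le> c" "c < 1"
    using small onorm_pos_le[OF Xi] onorm_pos_le[OF De.bounded_linear_axioms]
    by (simp_all add: c_def De_def)
  have contraction: "norm (Xi (De w)) \<le> c * norm w" for w
    using onorm[OF Xi, of "De w"] onorm[OF De.bounded_linear_axioms, of w] onorm_pos_le[OF Xi]
    by (simp add: c_def mult.assoc) (meson mult_left_mono order_trans)
  have fixed_point_iff: "X u = v \<longleftrightarrow> u = Xi v - Xi (De u)" for u v
  proof
    assume "X u = v"
    then show "u = Xi v - Xi (De u)"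
      by (simp add: De_def Xi.diff left)
  next
    assume "u = Xi v - Xi (De u)"
    then have "X0 u = v - De u"
      by (metis X0.diff right)
    then show "X u = v"
      by (simp add: De_def)
  qed
  have "\<exists>!u. X u = v" for v
  proof -
    have "\<exists>!u. Xi v - Xi (De u) = u"
    proof (rule banach_fix_type[OF \<open>0 \<le> c\<close> \<open>c < 1\<close>], intro allI)
      fix u w
      have "Xi v - Xi (De u) - (Xi v - Xi (De w)) = Xi (De (w - u))"
        by (simp add: Xi.diff De.diff)
      then show "dist (Xi v - Xi (De u)) (Xi v - Xi (De w)) \<le> c * dist u w"
        using contraction[of "w - u"] by (simp add: dist_norm norm_minus_commute)
    qed
    then show ?thesis
      using fixed_point_iff by metis
  qed
  then obtain Y where XY: "\<And>v. X (Y v) = v" and YX: "\<And>u. Y (X u) = u"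
    by metis
  have "norm (Y v) \<le> norm v * (onorm Xi / (1 - c))" for v
  proof -
    have "norm (Y v) \<le> norm (Xi v) + norm (Xi (De (Y v)))"
      using fixed_point_iff XY by (metis norm_triangle_ineq4)
    also have "\<dots> \<le> onorm Xi * norm v + c * norm (Y v)"
      by (intro add_mono onorm[OF Xi] contraction)
    finally show ?thesis
      using \<open>c < 1\<close> by (simp add: field_simps)
  qed
  moreover have "Y (a + b) = Y a + Y b" "Y (r *\<^sub>R a) = r *\<^sub>R Y a" for a b r
    by (metis XY YX X.add, metis XY YX X.scaleR)
  ultimately have "bounded_linear Y"
    by (intro bounded_linear_intro)
  then show ?thesis
    using XY YX by blast
qed

lemma bounded_inverse_near:
  fixes X :: "real \<Rightarrow> 'a::banach \<Rightarrow>\<^sub>L 'a"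
  assumes "isCont X x0" and Xi: "bounded_linear Xi"
    and "\<And>u. Xi (X x0 u) = u" and "\<And>u. X x0 (Xi u) = u"
  shows "\<exists>\<delta>>0. \<forall>t. dist t x0 < \<delta> \<longrightarrow>
    (\<exists>Y. bounded_linear Y \<and> (\<forall>u. Y (X t u) = u) \<and> (\<forall>u. X t (Y u) = u))"
proof -
  have "0 < 1 / (onorm Xi + 1)"
    using onorm_pos_le[OF Xi] by simp
  then obtain \<delta> where "\<delta> > 0" and \<delta>: "\<And>t. dist t x0 < \<delta> \<Longrightarrow> dist (X t) (X x0) < 1 / (onorm Xi + 1)"
    using assms(1) unfolding continuous_at_eps_delta by blast
  have "\<exists>Y. bounded_linear Y \<and> (\<forall>u. Y (X t u) = u) \<and> (\<forall>u. X t (Y u) = u)" if "dist t x0 < \<delta>" for t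
  proof (rule bounded_linear_inverse_perturbation[OF blinfun.bounded_linear_right Xi
        blinfun.bounded_linear_right assms(3,4)])
    have "onorm (\<lambda>u. X t u - X x0 u) = norm (X t - X x0)"
      unfolding norm_blinfun.rep_eq by (rule arg_cong[where f=onorm]) (auto simp: blinfun.bilinear_simps)
    also have "\<dots> < 1 / (onorm Xi + 1)"
      using \<delta>[OF that] by (simp add: dist_norm)
    finally have "onorm Xi * onorm (\<lambda>u. X t u - X x0 u) \<le> onorm Xi * (1 / (onorm Xi + 1))"
      using onorm_pos_le[OF Xi] by (intro mult_left_mono) auto
    also have "\<dots> < 1"
      using onorm_pos_le[OF Xi] by simp
    finally show "onorm Xi * onorm (\<lambda>u. X t u - X x0 u) < 1" .
  qed
  then show ?thesis
    using \<open>\<delta> > 0\<close> by blast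
qed

section \<open>The vessel equations for bounded generators\<close>

definition mat_blinfun :: "complex^2^2 \<Rightarrow> (complex^2) \<Rightarrow>\<^sub>L (complex^2)" where
  "mat_blinfun M = Blinfun ((*v) M)"

lemma mat_blinfun_apply [simp]: "blinfun_apply (mat_blinfun M) v = M *v v"
  by (simp add: mat_blinfun_def bounded_linear_Blinfun_apply)

text \<open>The right-hand sides \<open>-(A B \<sigma>\<^sub>2 + B \<gamma>) \<sigma>\<^sub>1\<inverse>\<close> and \<open>\<sigma>\<^sub>1\<inverse> (\<gamma> C - \<sigma>\<^sub>2 C A\<zeta>)\<close> of the vessel
equations for \<open>\<partial>\<^sub>x B\<close> and \<open>\<partial>\<^sub>x C\<close>.\<close>

definition input_flow :: "('k::real_normed_vector \<Rightarrow>\<^sub>L 'k) \<Rightarrow> complex^2^2 \<Rightarrow> complex^2^2 \<Rightarrow> complex^2^2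
    \<Rightarrow> ((complex^2) \<Rightarrow>\<^sub>L 'k) \<Rightarrow> ((complex^2) \<Rightarrow>\<^sub>L 'k)" where
  "input_flow A \<sigma>1 \<sigma>2 \<gamma> B =
     - (A o\<^sub>L B o\<^sub>L mat_blinfun (\<sigma>2 ** matrix_inv \<sigma>1)) - (B o\<^sub>L mat_blinfun (\<gamma> ** matrix_inv \<sigma>1))"

definition output_flow :: "('k::real_normed_vector \<Rightarrow>\<^sub>L 'k) \<Rightarrow> complex^2^2 \<Rightarrow> complex^2^2 \<Rightarrow> complex^2^2
    \<Rightarrow> ('k \<Rightarrow>\<^sub>L (complex^2)) \<Rightarrow> ('k \<Rightarrow>\<^sub>L (complex^2))" where
  "output_flow A\<zeta> \<sigma>1 \<sigma>2 \<gamma> C =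
     mat_blinfun (matrix_inv \<sigma>1) o\<^sub>L ((mat_blinfun \<gamma> o\<^sub>L C) - (mat_blinfun \<sigma>2 o\<^sub>L C o\<^sub>L A\<zeta>))"

lemma bounded_linear_input_flow: "bounded_linear (input_flow A \<sigma>1 \<sigma>2 \<gamma>)"
  unfolding input_flow_def
  by (intro bounded_linear_sub bounded_linear_minus bounded_linear_ident
      bounded_linear_blinfun_compose_const
      bounded_linear_const_blinfun_compose)

lemma bounded_linear_output_flow: "bounded_linear (output_flow A\<zeta> \<sigma>1 \<sigma>2 \<gamma>)"
  unfolding output_flow_def
  by (intro bounded_linear_sub bounded_linear_ident
      bounded_linear_blinfun_compose_const
      bounded_linear_const_blinfun_compose)

lemma matrix_inv_mult:
  fixes M :: "'a::semiring_1^'n^'n"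
  assumes "invertible M"
  shows "M ** matrix_inv M = mat 1" "matrix_inv M ** M = mat 1"
  using someI_ex[OF assms[unfolded invertible_def]] by (simp_all add: matrix_inv_def)

lemma lyapunov_derivative_vanishes:
  assumes "invertible \<sigma>1"
  shows "(A o\<^sub>L (B o\<^sub>L mat_blinfun \<sigma>2 o\<^sub>L C)) + ((B o\<^sub>L mat_blinfun \<sigma>2 o\<^sub>L C) o\<^sub>L A\<zeta>)
      + (B o\<^sub>L mat_blinfun \<sigma>1 o\<^sub>L output_flow A\<zeta> \<sigma>1 \<sigma>2 \<gamma> C)
      + (input_flow A \<sigma>1 \<sigma>2 \<gamma> B o\<^sub>L mat_blinfun \<sigma>1 o\<^sub>L C) = 0"
proof -
  have "\<sigma>1 ** matrix_inv \<sigma>1 = mat 1" "matrix_inv \<sigma>1 ** \<sigma>1 = mat 1"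
    using assms by (rule matrix_inv_mult)+
  then have "\<sigma>1 *v (matrix_inv \<sigma>1 *v v) = v" "matrix_inv \<sigma>1 *v (\<sigma>1 *v v) = v" for v
    by (simp_all add: matrix_vector_mul_assoc)
  then show ?thesis
    by (intro blinfun_eqI)
       (simp add: input_flow_def output_flow_def blinfun.bilinear_simps matrix_vector_mult_diff_distrib
        flip: matrix_vector_mul_assoc)
qed

lemma bounded_linear_cv: "bounded_linear (cv a)"
proof -
  have "cv a = (*v) (mat a :: complex^2^2)"
    by (auto simp: vec_eq_iff matrix_vector_mult_def mat_def if_distrib if_distribR cong: if_cong)
  then show ?thesis
    by simp
qed

lemma closed_cblin_blinfuns:
  assumes "\<And>a. bounded_linear (sb a)"
  shows "closed {F :: 'a::real_normed_vector \<Rightarrow>\<^sub>L 'b::real_normed_vector. cblin sa sb (blinfun_apply F)}"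
proof -
  have "{F :: 'a \<Rightarrow>\<^sub>L 'b. cblin sa sb (blinfun_apply F)} =
      (\<Inter>a. \<Inter>x. {F. blinfun_apply F (sa a x) = sb a (blinfun_apply F x)})"
    by (auto simp: cblin_def blinfun.bounded_linear_right)
  moreover have "closed {F :: 'a \<Rightarrow>\<^sub>L 'b. blinfun_apply F (sa a x) = sb a (blinfun_apply F x)}" for a x
    by (intro closed_Collect_eq linear_continuous_on blinfun.bounded_linear_left
        bounded_linear_compose[OF assms blinfun.bounded_linear_left])
  ultimately show ?thesis
    by (simp add: closed_INT)
qed

lemma subspace_cblin_blinfuns:
  assumes "\<And>a. bounded_linear (sb a)"
  shows "subspace {F :: 'a::real_normed_vector \<Rightarrow>\<^sub>L 'b::real_normed_vector. cblin sa sb (blinfun_apply F)}"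
proof -
  have "sb a (x + y) = sb a x + sb a y" "sb a (r *\<^sub>R x) = r *\<^sub>R sb a x" "sb a 0 = 0" for a x y r
    using assms[of a] by (simp_all add: linear_simps)
  then show ?thesis
    by (auto simp: subspace_def cblin_def blinfun.bounded_linear_right blinfun.bilinear_simps)
qed

lemma input_flow_cblin:
  assumes sc: "\<And>a. bounded_linear (sc a)" and A: "cblin sc sc (blinfun_apply A)"
    and B: "cblin cv sc (blinfun_apply B)"
  shows "cblin cv sc (blinfun_apply (input_flow A \<sigma>1 \<sigma>2 \<gamma> B))"
proof -
  have "sc a (x - y) = sc a x - sc a y" "sc a (- x) = - sc a x" for a x y
    using sc[of a] by (simp_all add: linear_simps)
  then show ?thesis
    using A B unfolding cblin_def
    by (simp add: input_flow_def blinfun.bilinear_simps blinfun.bounded_linear_right vector_scalar_commute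
        flip: matrix_vector_mul_assoc)
qed

lemma output_flow_cblin:
  assumes A\<zeta>: "cblin sc sc (blinfun_apply A\<zeta>)" and C: "cblin sc cv (blinfun_apply C)"
  shows "cblin sc cv (blinfun_apply (output_flow A\<zeta> \<sigma>1 \<sigma>2 \<gamma> C))"
  using A\<zeta> C unfolding cblin_def
  by (simp add: output_flow_def blinfun.bilinear_simps blinfun.bounded_linear_right vector_scalar_commute
      vector_ssub_ldistrib)

section \<open>Construction of the vessel\<close>

lemma vessel_flow_exists:
  fixes sc :: "complex \<Rightarrow> 'k::banach \<Rightarrow> 'k"
  assumes sc: "\<And>a. bounded_linear (sc a)"
    and A: "cblin sc sc (blinfun_apply A)" and A\<zeta>: "cblin sc sc (blinfun_apply A\<zeta>)"
    and B\<^sub>0: "cblin cv sc (blinfun_apply B\<^sub>0)" and C\<^sub>0: "cblin sc cv (blinfun_apply C\<^sub>0)"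
  obtains B C X where "B t\<^sub>0 = B\<^sub>0" "C t\<^sub>0 = C\<^sub>0" "X t\<^sub>0 = X\<^sub>0"
    and "\<And>t. (B has_vector_derivative input_flow A \<sigma>1 \<sigma>2 \<gamma> (B t)) (at t)"
    and "\<And>t. (C has_vector_derivative output_flow A\<zeta> \<sigma>1 \<sigma>2 \<gamma> (C t)) (at t)"
    and "\<And>t. (X has_vector_derivative (B t o\<^sub>L mat_blinfun \<sigma>2 o\<^sub>L C t)) (at t)"
    and "\<And>t. cblin cv sc (blinfun_apply (B t))" and "\<And>t. cblin sc cv (blinfun_apply (C t))"
proof -
  have "input_flow A \<sigma>1 \<sigma>2 \<gamma> ` {F. cblin cv sc (blinfun_apply F)} \<subseteq> {F. cblin cv sc (blinfun_apply F)}"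
    using input_flow_cblin[OF sc A] by blast
  from linear_ode_solution_in_closed_subspace[OF bounded_linear_input_flow
      closed_cblin_blinfuns[OF sc, of cv] subspace_cblin_blinfuns[OF sc, of cv] this,
      where v="B\<^sub>0" and s="t\<^sub>0"] B\<^sub>0
  obtain B where B: "B t\<^sub>0 = B\<^sub>0" "\<And>t. (B has_vector_derivative input_flow A \<sigma>1 \<sigma>2 \<gamma> (B t)) (at t)"
    "\<And>t. cblin cv sc (blinfun_apply (B t))"
    by auto
  have "output_flow A\<zeta> \<sigma>1 \<sigma>2 \<gamma> ` {F. cblin sc cv (blinfun_apply F)} \<subseteq> {F. cblin sc cv (blinfun_apply F)}"
    using output_flow_cblin[OF A\<zeta>] by blast
  from linear_ode_solution_in_closed_subspace[OF bounded_linear_output_flow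
      closed_cblin_blinfuns[OF bounded_linear_cv, of sc]
      subspace_cblin_blinfuns[OF bounded_linear_cv, of sc] this, where v="C\<^sub>0" and s="t\<^sub>0"] C\<^sub>0
  obtain C where C: "C t\<^sub>0 = C\<^sub>0" "\<And>t. (C has_vector_derivative output_flow A\<zeta> \<sigma>1 \<sigma>2 \<gamma> (C t)) (at t)"
    "\<And>t. cblin sc cv (blinfun_apply (C t))"
    by auto
  have "continuous_on UNIV B" "continuous_on UNIV C"
    using B(2) C(2) by (meson continuous_at_imp_continuous_on has_vector_derivative_continuous)+
  then have "continuous_on UNIV (\<lambda>t. B t o\<^sub>L mat_blinfun \<sigma>2 o\<^sub>L C t)"
    by (intro continuous_intros)
  then obtain X where "X t\<^sub>0 = X\<^sub>0" "\<And>t. (X has_vector_derivative (B t o\<^sub>L mat_blinfun \<sigma>2 o\<^sub>L C t)) (at t)"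
    using continuous_has_antiderivative by blast
  then show ?thesis
    using that B C by simp
qed

lemma lyapunov_form_constant:
  assumes "invertible \<sigma>1"
    and B: "\<And>t. (B has_vector_derivative input_flow A \<sigma>1 \<sigma>2 \<gamma> (B t)) (at t)"
    and C: "\<And>t. (C has_vector_derivative output_flow A\<zeta> \<sigma>1 \<sigma>2 \<gamma> (C t)) (at t)"
    and X: "\<And>t. (X has_vector_derivative (B t o\<^sub>L mat_blinfun \<sigma>2 o\<^sub>L C t)) (at t)"
  shows "(A o\<^sub>L X t) + (X t o\<^sub>L A\<zeta>) + (B t o\<^sub>L mat_blinfun \<sigma>1 o\<^sub>L C t) =
    (A o\<^sub>L X s) + (X s o\<^sub>L A\<zeta>) + (B s o\<^sub>L mat_blinfun \<sigma>1 o\<^sub>L C s)"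
proof -
  define \<Phi> where "\<Phi> t = (A o\<^sub>L X t) + (X t o\<^sub>L A\<zeta>) + (B t o\<^sub>L mat_blinfun \<sigma>1 o\<^sub>L C t)" for t
  have "(\<Phi> has_vector_derivative 0) (at t)" for t
  proof -
    have "(\<Phi> has_vector_derivative
        (A o\<^sub>L (B t o\<^sub>L mat_blinfun \<sigma>2 o\<^sub>L C t)) + ((B t o\<^sub>L mat_blinfun \<sigma>2 o\<^sub>L C t) o\<^sub>L A\<zeta>)
        + ((B t o\<^sub>L mat_blinfun \<sigma>1 o\<^sub>L output_flow A\<zeta> \<sigma>1 \<sigma>2 \<gamma> (C t))
           + (input_flow A \<sigma>1 \<sigma>2 \<gamma> (B t) o\<^sub>L mat_blinfun \<sigma>1 o\<^sub>L C t))) (at t)"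
      unfolding \<Phi>_def
      by (intro has_vector_derivative_add X C B
          bounded_bilinear.has_vector_derivative[OF bounded_bilinear_blinfun_compose]
          has_vector_derivative_blinfun_compose_const
          has_vector_derivative_const_blinfun_compose)
    then show ?thesis
      using lyapunov_derivative_vanishes[OF assms(1), of A "B t" \<sigma>2 "C t" A\<zeta> \<gamma>]
      by (simp add: add.assoc)
  qed
  then show ?thesis
    using has_vector_derivative_zero_constant[of UNIV \<Phi>] unfolding \<Phi>_def by force
qed

lemma blinfun_commutes_constant:
  fixes X Q :: "real \<Rightarrow> 'a::real_normed_vector \<Rightarrow>\<^sub>L 'a"
  assumes "\<And>t. (X has_vector_derivative Q t) (at t)" and "\<And>t. (Q t o\<^sub>L S) = (S o\<^sub>L Q t)"
    and "(X s o\<^sub>L S) = (S o\<^sub>L X s)"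
  shows "(X t o\<^sub>L S) = (S o\<^sub>L X t)"
proof -
  have "((\<lambda>t. (X t o\<^sub>L S) - (S o\<^sub>L X t)) has_vector_derivative (Q t o\<^sub>L S) - (S o\<^sub>L Q t)) (at t)" for t
    by (intro has_vector_derivative_diff assms(1)
        has_vector_derivative_blinfun_compose_const
        has_vector_derivative_const_blinfun_compose)
  then obtain c where "\<And>t. (X t o\<^sub>L S) - (S o\<^sub>L X t) = c"
    using has_vector_derivative_zero_constant[of UNIV "\<lambda>t. (X t o\<^sub>L S) - (S o\<^sub>L X t)"] assms(2) by force
  then show ?thesis
    using assms(3) by (metis eq_iff_diff_eq_0)
qed

lemma node_along_flow:
  fixes sc :: "complex \<Rightarrow> 'k::banach \<Rightarrow> 'k" and A A\<zeta> :: "'k \<Rightarrow>\<^sub>L 'k" and X :: "real \<Rightarrow> 'k \<Rightarrow>\<^sub>L 'k"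
    and B :: "real \<Rightarrow> (complex^2) \<Rightarrow>\<^sub>L 'k" and C :: "real \<Rightarrow> 'k \<Rightarrow>\<^sub>L (complex^2)"
  assumes sc: "\<And>a. bounded_linear (sc a)" and \<sigma>1: "invertible \<sigma>1"
    and B: "\<And>t. (B has_vector_derivative input_flow A \<sigma>1 \<sigma>2 \<gamma> (B t)) (at t)"
    and C: "\<And>t. (C has_vector_derivative output_flow A\<zeta> \<sigma>1 \<sigma>2 \<gamma> (C t)) (at t)"
    and X: "\<And>t. (X has_vector_derivative (B t o\<^sub>L mat_blinfun \<sigma>2 o\<^sub>L C t)) (at t)"
    and B_cblin: "\<And>t. cblin cv sc (blinfun_apply (B t))"
    and C_cblin: "\<And>t. cblin sc cv (blinfun_apply (C t))"
    and node_s: "node sc UNIV A A\<zeta> \<sigma>1 (C s) (X s) (B s)"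
  shows "node sc UNIV A A\<zeta> \<sigma>1 (C t) (X t) (B t)"
proof -
  have X_s: "cblin sc sc (X s)"
    and generators: "\<exists>T. group_generator sc UNIV A T" "\<exists>T. group_generator sc UNIV A\<zeta> T"
    and lyapunov_s: "\<And>u. A (X s u) + X s (A\<zeta> u) + B s (\<sigma>1 *v C s u) = 0"
    using node_s unfolding node_def by blast+
  have "A (X t u) + X t (A\<zeta> u) + B t (\<sigma>1 *v C t u) = 0" for u
    using arg_cong[OF lyapunov_form_constant[OF \<sigma>1 B C X, of t s], of "\<lambda>F. blinfun_apply F u"]
    by (simp add: lyapunov_s blinfun.bilinear_simps)
  moreover have "cblin sc sc (X t)"
  proof -
    have "(X t o\<^sub>L Blinfun (sc a)) = (Blinfun (sc a) o\<^sub>L X t)" for a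
    proof (rule blinfun_commutes_constant[OF X])
      show "(B r o\<^sub>L mat_blinfun \<sigma>2 o\<^sub>L C r o\<^sub>L Blinfun (sc a)) =
          (Blinfun (sc a) o\<^sub>L (B r o\<^sub>L mat_blinfun \<sigma>2 o\<^sub>L C r))" for r
        using B_cblin[of r] C_cblin[of r] sc[of a] unfolding cblin_def
        by (intro blinfun_eqI) (simp add: bounded_linear_Blinfun_apply vector_scalar_commute)
      show "(X s o\<^sub>L Blinfun (sc a)) = (Blinfun (sc a) o\<^sub>L X s)"
        using X_s sc[of a] unfolding cblin_def
        by (intro blinfun_eqI) (simp add: bounded_linear_Blinfun_apply)
    qed
    then show ?thesis
      using sc unfolding cblin_def
      by (metis blinfun.bounded_linear_right blinfun_apply_blinfun_compose bounded_linear_Blinfun_apply)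
  qed
  ultimately show ?thesis
    using generators B_cblin C_cblin unfolding node_def by auto
qed

lemma prevessel_of_flow:
  fixes A A\<zeta> :: "'k::banach \<Rightarrow>\<^sub>L 'k" and X :: "real \<Rightarrow> 'k \<Rightarrow>\<^sub>L 'k"
    and B :: "real \<Rightarrow> (complex^2) \<Rightarrow>\<^sub>L 'k" and C :: "real \<Rightarrow> 'k \<Rightarrow>\<^sub>L (complex^2)"
  assumes node: "\<And>t. node sc UNIV A A\<zeta> \<sigma>1 (C t) (X t) (B t)"
    and B: "\<And>t. (B has_vector_derivative input_flow A \<sigma>1 \<sigma>2 \<gamma> (B t)) (at t)"
    and C: "\<And>t. (C has_vector_derivative output_flow A\<zeta> \<sigma>1 \<sigma>2 \<gamma> (C t)) (at t)"
    and X: "\<And>t. (X has_vector_derivative (B t o\<^sub>L mat_blinfun \<sigma>2 o\<^sub>L C t)) (at t)"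
  shows "prevessel sc UNIV A A\<zeta> \<sigma>1 \<sigma>2 \<gamma>
    (\<lambda>t. blinfun_apply (C t)) (\<lambda>t. blinfun_apply (X t)) (\<lambda>t. blinfun_apply (B t))"
proof -
  have "blinfun_apply (input_flow A \<sigma>1 \<sigma>2 \<gamma> (B x)) =
      (\<lambda>e. - (A (B x (\<sigma>2 *v (matrix_inv \<sigma>1 *v e))) + B x (\<gamma> *v (matrix_inv \<sigma>1 *v e))))"
    "blinfun_apply (output_flow A\<zeta> \<sigma>1 \<sigma>2 \<gamma> (C x)) =
      (\<lambda>u. matrix_inv \<sigma>1 *v (- (\<sigma>2 *v C x (A\<zeta> u)) + \<gamma> *v C x u))"
    "blinfun_apply (B x o\<^sub>L mat_blinfun \<sigma>2 o\<^sub>L C x) = (\<lambda>u. B x (\<sigma>2 *v C x u))" for x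
    by (auto simp: input_flow_def output_flow_def blinfun.bilinear_simps matrix_vector_mult_diff_distrib
        simp flip: matrix_vector_mul_assoc)
  then show ?thesis
    unfolding prevessel_def
    using node op_has_deriv_blinfun_apply[OF B] op_has_deriv_blinfun_apply[OF C]
      op_has_deriv_blinfun_apply[OF X]
    by (metis UNIV_I)
qed

lemma invertible_node_near:
  fixes X :: "real \<Rightarrow> 'k::banach \<Rightarrow>\<^sub>L 'k"
  assumes node: "\<And>t. node sc UNIV A A\<zeta> \<sigma>1 (C t) (X t) (B t)" and "isCont X x0"
    and Xi: "bounded_linear Xi" "\<And>u. Xi (X x0 u) = u" "\<And>u. X x0 (Xi u) = u"
  shows "\<exists>\<delta>>0. \<forall>t\<in>{x0 - \<delta><..<x0 + \<delta>}. invertible_node sc UNIV A A\<zeta> \<sigma>1 (C t) (X t) (B t)"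
proof -
  obtain \<delta> where "\<delta> > 0" and inverse: "\<And>t. dist t x0 < \<delta> \<Longrightarrow>
      \<exists>Y. bounded_linear Y \<and> (\<forall>u. Y (X t u) = u) \<and> (\<forall>u. X t (Y u) = u)"
    using bounded_inverse_near[OF \<open>isCont X x0\<close> Xi] by blast
  have "invertible_node sc UNIV A A\<zeta> \<sigma>1 (C t) (X t) (B t)" if t: "t \<in> {x0 - \<delta><..<x0 + \<delta>}" for t
  proof -
    obtain Y where Y: "bounded_linear Y" "\<And>u. Y (X t u) = u" "\<And>u. X t (Y u) = u"
      using inverse[of t] t by (auto simp: dist_real_def abs_less_iff)
    then have "cblin sc sc Y"
      using node[of t] unfolding node_def cblin_def by metis
    then show ?thesis
      using Y node unfolding invertible_node_def by blast
  qed
  then show ?thesis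
    using \<open>\<delta> > 0\<close> by blast
qed

lemma vessel_through_bounded_node:
  fixes sc :: "complex \<Rightarrow> 'k::banach \<Rightarrow> 'k"
  assumes sc: "\<And>a. bounded_linear (sc a)" and \<sigma>1: "invertible \<sigma>1"
    and A: "cblin sc sc A" and A\<zeta>: "cblin sc sc A\<zeta>"
    and node0: "invertible_node sc UNIV A A\<zeta> \<sigma>1 C0 X0 B0"
  shows "\<exists>a b C X B. a < x0 \<and> x0 < b \<and> vessel sc UNIV A A\<zeta> \<sigma>1 \<sigma>2 \<gamma> {a<..<b} C X B \<and>
    C x0 = C0 \<and> X x0 = X0 \<and> B x0 = B0"
proof -
  have C0: "cblin sc cv C0" and X0: "cblin sc sc X0" and B0: "cblin cv sc B0"
    using node0 unfolding invertible_node_def node_def by blast+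
  obtain Xi0 where Xi0: "bounded_linear Xi0" "\<And>u. Xi0 (X0 u) = u" "\<And>u. X0 (Xi0 u) = u"
    using node0 unfolding invertible_node_def cblin_def by blast
  have Blinfun_apply [simp]: "blinfun_apply (Blinfun A) = A" "blinfun_apply (Blinfun A\<zeta>) = A\<zeta>"
    "blinfun_apply (Blinfun B0) = B0" "blinfun_apply (Blinfun C0) = C0" "blinfun_apply (Blinfun X0) = X0"
    using A A\<zeta> B0 C0 X0 unfolding cblin_def by (simp_all add: bounded_linear_Blinfun_apply)
  have "cblin sc sc (blinfun_apply (Blinfun A))" "cblin sc sc (blinfun_apply (Blinfun A\<zeta>))"
    "cblin cv sc (blinfun_apply (Blinfun B0))" "cblin sc cv (blinfun_apply (Blinfun C0))"
    using A A\<zeta> B0 C0 by simp_all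
  from vessel_flow_exists[OF sc this, where t\<^sub>0=x0 and X\<^sub>0="Blinfun X0" and \<gamma>=\<gamma>]
  obtain B C X where init: "B x0 = Blinfun B0" "C x0 = Blinfun C0" "X x0 = Blinfun X0"
    and B: "\<And>t. (B has_vector_derivative input_flow (Blinfun A) \<sigma>1 \<sigma>2 \<gamma> (B t)) (at t)"
    and C: "\<And>t. (C has_vector_derivative output_flow (Blinfun A\<zeta>) \<sigma>1 \<sigma>2 \<gamma> (C t)) (at t)"
    and X: "\<And>t. (X has_vector_derivative (B t o\<^sub>L mat_blinfun \<sigma>2 o\<^sub>L C t)) (at t)"
    and "\<And>t. cblin cv sc (blinfun_apply (B t))" "\<And>t. cblin sc cv (blinfun_apply (C t))"
    by blast
  then have node: "node sc UNIV A A\<zeta> \<sigma>1 (C t) (X t) (B t)" for t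
    using node_along_flow[where sc=sc, OF sc \<sigma>1 B C X, where s=x0] node0
    by (simp add: init invertible_node_def)
  have "prevessel sc UNIV A A\<zeta> \<sigma>1 \<sigma>2 \<gamma>
      (\<lambda>t. blinfun_apply (C t)) (\<lambda>t. blinfun_apply (X t)) (\<lambda>t. blinfun_apply (B t))"
    using prevessel_of_flow[OF _ B C X] node by simp
  moreover obtain \<delta> where "\<delta> > 0"
    and "\<forall>t\<in>{x0 - \<delta><..<x0 + \<delta>}. invertible_node sc UNIV A A\<zeta> \<sigma>1 (C t) (X t) (B t)"
    using invertible_node_near[OF node has_vector_derivative_continuous[OF X[of x0]] Xi0(1)] Xi0(2,3)
    by (auto simp: init)
  ultimately have "vessel sc UNIV A A\<zeta> \<sigma>1 \<sigma>2 \<gamma> {x0 - \<delta><..<x0 + \<delta>}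
      (\<lambda>t. blinfun_apply (C t)) (\<lambda>t. blinfun_apply (X t)) (\<lambda>t. blinfun_apply (B t))"
    unfolding vessel_def by blast
  moreover have "blinfun_apply (C x0) = C0" "blinfun_apply (X x0) = X0" "blinfun_apply (B x0) = B0"
    by (simp_all add: init)
  ultimately show ?thesis
    using \<open>\<delta> > 0\<close>
    by (intro exI[of _ "x0 - \<delta>"] exI[of _ "x0 + \<delta>"] exI[of _ "\<lambda>t. blinfun_apply (C t)"]
        exI[of _ "\<lambda>t. blinfun_apply (X t)"] exI[of _ "\<lambda>t. blinfun_apply (B t)"]) auto
qed

theorem mainTheorem7:
  fixes sc :: "complex \<Rightarrow> 'k::banach \<Rightarrow> 'k"
    and ip kf :: "'k \<Rightarrow> 'k \<Rightarrow> complex"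
    and D :: "'k set" and A A\<zeta> :: "'k \<Rightarrow> 'k"
    and \<sigma>1 \<sigma>2 \<gamma> :: "complex^2^2"
    and C0 :: "'k \<Rightarrow> complex^2" and X0 :: "'k \<Rightarrow> 'k" and B0 :: "complex^2 \<Rightarrow> 'k"
    and x0 :: real
  assumes "krein_space sc ip kf"
    and "invertible \<sigma>1" and "madj \<sigma>1 = \<sigma>1"
    and "invertible_node sc D A A\<zeta> \<sigma>1 C0 X0 B0"
    and "\<exists>T. group_generator sc D A T \<and> analytic_semigroup sc T"
    and "\<exists>T. group_generator sc D A\<zeta> T \<and> analytic_semigroup sc T"
    and "madj \<sigma>2 = \<sigma>2" and "madj \<gamma> = - \<gamma>"
  shows "\<exists>a b C X B. a < x0 \<and> x0 < b \<and>
           vessel sc D A A\<zeta> \<sigma>1 \<sigma>2 \<gamma> {a<..<b} C X B \<and>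
           C x0 = C0 \<and> X x0 = X0 \<and> B x0 = B0"
proof -
  have H: "complex_hilbert sc ip"
    using assms(1) unfolding krein_space_def by blast
  obtain TA TZ where TA: "group_generator sc D A TA" "analytic_semigroup sc TA"
    and TZ: "group_generator sc D A\<zeta> TZ" "analytic_semigroup sc TZ"
    using assms(5,6) by blast
  have D: "D = UNIV"
    using analytic_group_generator_domain_UNIV[OF H TA] .
  have "cblin sc sc A" "cblin sc sc A\<zeta>"
    using group_generator_UNIV_cblin[OF H] TA(1) TZ(1) unfolding D by blast+
  then show ?thesis
    using vessel_through_bounded_node[where sc=sc, OF complex_hilbert_scale_bounded_linear[OF H] assms(2)]
      assms(4)
    unfolding D by blast
qed

end
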